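(* (1) For any poset $P$ and any subset $P_0\subseteq P$ (with the induced order), no isotone map $P_0\to\mathrm{Down}(P)$ is surjective. (2) More strongly, for any poset $P_0$ and any upper semilattice $T$ containing $\mathrm{Down}(P_0)$ as an upper subsemilattice, there is no isotone map $f:P_0\to T$ such that $f(P_0)$ generates $T$ as an upper semilattice.
   Context: For a poset $P$, a downset of $P$ is a subset $d$ with $x\le y\in d\Rightarrow x\in d$. $\mathrm{Down}(P)$ denotes the lattice of all downsets of $P$ (including $\emptyset$), ordered by inclusion, with join given by union. A map of posets is isotone if it preserves $\le$. *)

theory Defs
  imports Main
begin

definition downset :: "'a set \<Rightarrow> 'a rel \<Rightarrow> 'a set \<Rightarrow> bool" where
  "downset P r d \<longleftrightarrow> d \<subseteq> P \<and> (\<forall>x y. (x, y) \<in> r \<and> y \<in> d \<longrightarrow> x \<in> d)"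

definition Down :: "'a set \<Rightarrow> 'a rel \<Rightarrow> 'a set set" where
  "Down P r = {d. downset P r d}"

definition isotone_on :: "'a set \<Rightarrow> 'a rel \<Rightarrow> ('b \<Rightarrow> 'b \<Rightarrow> bool) \<Rightarrow> ('a \<Rightarrow> 'b) \<Rightarrow> bool" where
  "isotone_on A r le f \<longleftrightarrow> (\<forall>x\<in>A. \<forall>y\<in>A. (x, y) \<in> r \<longrightarrow> le (f x) (f y))"

inductive_set sup_generated :: "'b::semilattice_sup set \<Rightarrow> 'b set" for S where
  gen: "x \<in> S \<Longrightarrow> x \<in> sup_generated S"
| join: "x \<in> sup_generated S \<Longrightarrow> y \<in> sup_generated S \<Longrightarrow> sup x y \<in> sup_generated S"

end

theory Submission
  imports Defs
begin

text \<open>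
  (1) is Cantor's diagonal argument: the downward closure of \<open>{y \<in> P\<^sub>0. y \<notin> f y}\<close>
  is a downset differing from every \<open>f p\<close>.

  (2) Every element of the generated subsemilattice is a finite join \<open>\<Squnion>f(S)\<close>. The map
  \<open>\<iota> A = {x. f x \<le> e A}\<close> is monotone on \<open>Down(P\<^sub>0)\<close>; let \<open>J\<close> be its least prefixed point
  and write \<open>e J = \<Squnion>f(S)\<close>, so that \<open>S \<subseteq> \<iota> J \<subseteq> J\<close>. Ascending from \<open>\<emptyset>\<close> by \<open>\<iota>\<close>, one
  reaches a postfixed point \<open>A\<close> with \<open>S \<subseteq> \<iota> A\<close> but \<open>S \<subseteq> A\<close> fails. Then \<open>e J \<le> e A\<close>, and since
  \<open>e\<close> is an order embedding, \<open>J \<subseteq> A\<close>, contradicting \<open>S \<subseteq> J\<close>.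
\<close>

lemma Union_in_Down: "F \<subseteq> Down P r \<Longrightarrow> \<Union>F \<in> Down P r"
  unfolding Down_def downset_def by blast

lemma Inter_in_Down: "F \<subseteq> Down P r \<Longrightarrow> F \<noteq> {} \<Longrightarrow> \<Inter>F \<in> Down P r"
  unfolding Down_def downset_def by blast

lemma carrier_in_Down: "r \<subseteq> P \<times> P \<Longrightarrow> P \<in> Down P r"
  unfolding Down_def downset_def by blast

lemma sublevel_in_Down:
  fixes f :: "'a \<Rightarrow> 'b::preorder"
  assumes "preorder_on P r" and "isotone_on P r (\<le>) f"
  shows "{x \<in> P. f x \<le> t} \<in> Down P r"
  using assms unfolding Down_def downset_def isotone_on_def preorder_on_def
  by (blast intro: order_trans)

lemma Down_not_subset_isotone_image:
  assumes po: "preorder_on P r" and "P\<^sub>0 \<subseteq> P" and iso: "isotone_on P\<^sub>0 r (\<subseteq>) f"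
  shows "\<not> Down P r \<subseteq> f ` P\<^sub>0"
proof
  assume onto: "Down P r \<subseteq> f ` P\<^sub>0"
  define D where "D = {x \<in> P. \<exists>y\<in>P\<^sub>0. (x, y) \<in> r \<and> y \<notin> f y}"
  have refl: "(x, x) \<in> r" if "x \<in> P\<^sub>0" for x
    using po \<open>P\<^sub>0 \<subseteq> P\<close> that unfolding preorder_on_def refl_on_def by blast
  have "D \<in> Down P r"
    using po unfolding D_def Down_def downset_def preorder_on_def by (blast dest: transD)
  with onto obtain p where p: "p \<in> P\<^sub>0" "f p = D" by blast
  show False
  proof (cases "p \<in> D")
    case True
    then obtain y where y: "y \<in> P\<^sub>0" "(p, y) \<in> r" "y \<notin> f y" unfolding D_def by blast
    have "y \<in> D" using y refl \<open>P\<^sub>0 \<subseteq> P\<close> unfolding D_def by blast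
    moreover have "f p \<subseteq> f y" using iso p(1) y(1,2) unfolding isotone_on_def by blast
    ultimately show False using p(2) y(3) by blast
  next
    case False
    then show False using p refl \<open>P\<^sub>0 \<subseteq> P\<close> unfolding D_def by blast
  qed
qed

lemma sup_generated_image_eq_Sup_fin:
  assumes "t \<in> sup_generated (f ` A)"
  shows "\<exists>S \<subseteq> A. finite S \<and> S \<noteq> {} \<and> t = \<Squnion>\<^sub>f\<^sub>i\<^sub>n (f ` S)"
  using assms
proof (induction rule: sup_generated.induct)
  case (gen x)
  then obtain p where "p \<in> A" "x = f p" by blast
  then show ?case by (intro exI[of _ "{p}"]) simp
next
  case (join x y)
  then obtain S T where "S \<subseteq> A" "finite S" "S \<noteq> {}" "x = \<Squnion>\<^sub>f\<^sub>i\<^sub>n (f ` S)"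
    and "T \<subseteq> A" "finite T" "T \<noteq> {}" "y = \<Squnion>\<^sub>f\<^sub>i\<^sub>n (f ` T)"
    by blast
  then show ?case
    by (intro exI[of _ "S \<union> T"]) (simp add: image_Un Sup_fin.union)
qed

lemma inj_sup_hom_le_iff:
  fixes e :: "'a::semilattice_sup \<Rightarrow> 'b::semilattice_sup"
  assumes inj: "inj_on e L"
    and closed: "\<And>A B. A \<in> L \<Longrightarrow> B \<in> L \<Longrightarrow> sup A B \<in> L"
    and hom: "\<And>A B. A \<in> L \<Longrightarrow> B \<in> L \<Longrightarrow> e (sup A B) = sup (e A) (e B)"
    and "A \<in> L" "B \<in> L"
  shows "e A \<le> e B \<longleftrightarrow> A \<le> B"
proof
  assume "e A \<le> e B"
  then have "e (sup A B) = e B" using hom \<open>A \<in> L\<close> \<open>B \<in> L\<close> by (simp add: sup.absorb2)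
  then have "sup A B = B" using inj closed \<open>A \<in> L\<close> \<open>B \<in> L\<close> by (blast dest: inj_onD)
  then show "A \<le> B" by (metis sup.cobounded1)
next
  assume "A \<le> B"
  then have "e B = sup (e A) (e B)" using hom \<open>A \<in> L\<close> \<open>B \<in> L\<close> by (metis sup.absorb2)
  then show "e A \<le> e B" by (metis sup.cobounded1)
qed

text \<open>
  Zorn's lemma stands in for the transfinite iteration of \<open>\<phi>\<close> from \<open>{}\<close>; finiteness of \<open>S\<close>
  is what keeps the sets not containing \<open>S\<close> closed under unions of chains.
\<close>

lemma monotone_postfixed_point_crossing:
  fixes L :: "'a set set" and \<phi> :: "'a set \<Rightarrow> 'a set"
  assumes chain_closed: "\<And>C. C \<in> chains L \<Longrightarrow> \<Union>C \<in> L"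
    and maps_to: "\<And>A. A \<in> L \<Longrightarrow> \<phi> A \<in> L"
    and mono: "\<And>A B. A \<in> L \<Longrightarrow> B \<in> L \<Longrightarrow> A \<subseteq> B \<Longrightarrow> \<phi> A \<subseteq> \<phi> B"
    and "finite S" "S \<noteq> {}"
    and prefixed_contains: "\<And>A. A \<in> L \<Longrightarrow> \<phi> A \<subseteq> A \<Longrightarrow> S \<subseteq> A"
  obtains A where "A \<in> L" "A \<subseteq> \<phi> A" "\<not> S \<subseteq> A" "S \<subseteq> \<phi> A"
proof -
  define Z where "Z = {A \<in> L. A \<subseteq> \<phi> A \<and> \<not> S \<subseteq> A}"
  have "\<Union>C \<in> Z" if C: "C \<in> chains Z" for C
  proof -
    have CZ: "C \<subseteq> Z" using C by (rule chainsD2)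
    have "C \<in> chains L" using C unfolding chains_alt_def subset.chain_def Z_def by blast
    then have UL: "\<Union>C \<in> L" by (rule chain_closed)
    have "\<Union>C \<subseteq> \<phi> (\<Union>C)"
    proof
      fix x assume "x \<in> \<Union>C"
      then obtain A where "A \<in> C" "x \<in> A" by blast
      with CZ have "A \<in> L" "x \<in> \<phi> A" unfolding Z_def by auto
      with mono[OF _ UL] \<open>A \<in> C\<close> show "x \<in> \<phi> (\<Union>C)" by blast
    qed
    moreover have "\<not> S \<subseteq> \<Union>C"
    proof
      assume S_C: "S \<subseteq> \<Union>C"
      then have "C \<noteq> {}" using \<open>S \<noteq> {}\<close> by auto
      then obtain B where "B \<in> C" "S \<subseteq> B"
        using finite_subset_Union_chain[OF \<open>finite S\<close> S_C] C unfolding chains_alt_def by blast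
      with CZ show False unfolding Z_def by blast
    qed
    ultimately show ?thesis using UL unfolding Z_def by blast
  qed
  then obtain M where "M \<in> Z" and maximal: "\<And>X. X \<in> Z \<Longrightarrow> M \<subseteq> X \<Longrightarrow> X = M"
    using Zorn_Lemma[of Z] by blast
  then have M: "M \<in> L" "M \<subseteq> \<phi> M" "\<not> S \<subseteq> M" unfolding Z_def by auto
  have "S \<subseteq> \<phi> M"
  proof (rule ccontr)
    assume "\<not> S \<subseteq> \<phi> M"
    with M maps_to mono have "\<phi> M \<in> Z" unfolding Z_def by blast
    with maximal M(2) have "\<phi> M = M" by blast
    with prefixed_contains M show False by blast
  qed
  with M that show ?thesis by blast
qed

lemma sup_generated_isotone_image_ne_UNIV:
  fixes e :: "'c set \<Rightarrow> 'b::semilattice_sup" and f :: "'c \<Rightarrow> 'b"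
  assumes po: "preorder_on P r"
    and inj: "inj_on e (Down P r)"
    and hom: "\<forall>A\<in>Down P r. \<forall>B\<in>Down P r. e (A \<union> B) = sup (e A) (e B)"
    and iso: "isotone_on P r (\<le>) f"
  shows "sup_generated (f ` P) \<noteq> UNIV"
proof
  assume gen: "sup_generated (f ` P) = UNIV"
  have le_iff: "e A \<le> e B \<longleftrightarrow> A \<subseteq> B" if "A \<in> Down P r" "B \<in> Down P r" for A B
    using inj_sup_hom_le_iff[OF inj _ _ that] hom Union_in_Down[of "{_, _}" P r] by simp
  define \<iota> where "\<iota> A = {x \<in> P. f x \<le> e A}" for A
  have \<iota>_Down: "\<iota> A \<in> Down P r" for A
    unfolding \<iota>_def using po iso by (rule sublevel_in_Down)
  have \<iota>_mono: "\<iota> A \<subseteq> \<iota> B" if "A \<in> Down P r" "B \<in> Down P r" "A \<subseteq> B" for A B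
    using le_iff[OF that(1,2)] that(3) unfolding \<iota>_def by (auto intro: order_trans)
  define J where "J = \<Inter>{A \<in> Down P r. \<iota> A \<subseteq> A}"
  have J_lower: "J \<subseteq> A" if "A \<in> Down P r" "\<iota> A \<subseteq> A" for A
    unfolding J_def using that by blast
  have "P \<in> Down P r" using po unfolding preorder_on_def by (blast intro: carrier_in_Down)
  moreover have "\<iota> P \<subseteq> P" unfolding \<iota>_def by blast
  ultimately have J_Down: "J \<in> Down P r" unfolding J_def by (intro Inter_in_Down) blast+
  have \<iota>_J: "\<iota> J \<subseteq> J"
    using J_lower \<iota>_mono[OF J_Down] unfolding J_def by blast
  obtain S where S: "S \<subseteq> P" "finite S" "S \<noteq> {}" and eJ: "e J = \<Squnion>\<^sub>f\<^sub>i\<^sub>n (f ` S)"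
    using sup_generated_image_eq_Sup_fin[of "e J" f P] gen by blast
  have eJ_le: "e J \<le> t \<longleftrightarrow> (\<forall>s\<in>S. f s \<le> t)" for t
    unfolding eJ using S(2,3) by (simp add: Sup_fin.bounded_iff)
  have "S \<subseteq> \<iota> J" using eJ_le[of "e J"] S(1) unfolding \<iota>_def by blast
  with \<iota>_J have S_J: "S \<subseteq> J" by blast
  obtain A where A: "A \<in> Down P r" "\<not> S \<subseteq> A" "S \<subseteq> \<iota> A"
  proof (rule monotone_postfixed_point_crossing[of "Down P r" \<iota> S])
    show "\<Union>C \<in> Down P r" if "C \<in> chains (Down P r)" for C
      using that by (blast dest: chainsD2 intro: Union_in_Down)
    show "S \<subseteq> A" if "A \<in> Down P r" "\<iota> A \<subseteq> A" for A
      using S_J J_lower[OF that] by blast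
  qed (use \<iota>_Down \<iota>_mono S in auto)
  have "e J \<le> e A" using A(3) eJ_le unfolding \<iota>_def by blast
  with le_iff[OF J_Down A(1)] S_J A(2) show False by blast
qed

theorem corollary3p2:
  shows "(\<forall>(P :: 'a set) r P0 (f :: 'a \<Rightarrow> 'a set).
            partial_order_on P r \<and> P0 \<subseteq> P \<and>
            isotone_on P0 r (\<subseteq>) f \<and> f ` P0 \<subseteq> Down P r
            \<longrightarrow> f ` P0 \<noteq> Down P r)
       \<and> (\<forall>(P0 :: 'c set) r0 (e :: 'c set \<Rightarrow> 'b::semilattice_sup) (f :: 'c \<Rightarrow> 'b).
            partial_order_on P0 r0 \<and>
            inj_on e (Down P0 r0) \<and>
            (\<forall>A\<in>Down P0 r0. \<forall>B\<in>Down P0 r0. e (A \<union> B) = sup (e A) (e B)) \<and>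
            isotone_on P0 r0 (\<le>) f
            \<longrightarrow> sup_generated (f ` P0) \<noteq> UNIV)"
proof (intro conjI allI impI)
  fix P :: "'a set" and r P0 and f :: "'a \<Rightarrow> 'a set"
  assume "partial_order_on P r \<and> P0 \<subseteq> P \<and> isotone_on P0 r (\<subseteq>) f \<and> f ` P0 \<subseteq> Down P r"
  then show "f ` P0 \<noteq> Down P r"
    using Down_not_subset_isotone_image[of P r P0 f] unfolding partial_order_on_def by auto
next
  fix P0 :: "'c set" and r0 and e :: "'c set \<Rightarrow> 'b" and f :: "'c \<Rightarrow> 'b"
  assume "partial_order_on P0 r0 \<and> inj_on e (Down P0 r0) \<and>
    (\<forall>A\<in>Down P0 r0. \<forall>B\<in>Down P0 r0. e (A \<union> B) = sup (e A) (e B)) \<and>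
    isotone_on P0 r0 (\<le>) f"
  then show "sup_generated (f ` P0) \<noteq> UNIV"
    using sup_generated_isotone_image_ne_UNIV[of P0 r0 e f] unfolding partial_order_on_def by blast
qed

end
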